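(* There are constants $C_1>0$ and $C_2>0$ such that for every $n$ the following holds: let $r_\star$ be an integer maximising $q_n^r$ over $r$, let $r$ be an integer with $|r-r_\star|\le\sqrt{n\log n}$, and let $d_\star=d_\star(r,n)$ be an integer maximising $q_n^{r,d}$ over $d$. Then \[ C_1\frac{q_n^r}{\sqrt n} \le q_n^{r,d_\star} \le C_2\frac{q_n^r}{\sqrt n}. \]
   Context: $Q(P_n)$ is the family of subsets of $[n]$ containing no two consecutive integers, $Q^{(r)}(P_n)$ its members of size $r$, and $q_n^r=|Q^{(r)}(P_n)|$. The out-degree $d^+(A)$ of $A\in Q(P_n)$ is the number of $b\in[n]\setminus A$ with $A\cup\{b\}\in Q(P_n)$; $q_n^{r,d}$ is the number of $A\in Q^{(r)}(P_n)$ with $d^+(A)=d$. *)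

theory Defs
  imports Complex_Main
begin

definition QP :: "nat \<Rightarrow> nat set set" where
  "QP n = {A. A \<subseteq> {1..n} \<and> (\<forall>i\<in>A. Suc i \<notin> A)}"

definition QPr :: "nat \<Rightarrow> int \<Rightarrow> nat set set" where
  "QPr n r = {A \<in> QP n. int (card A) = r}"

definition q :: "nat \<Rightarrow> int \<Rightarrow> nat" where
  "q n r = card (QPr n r)"

definition outdeg :: "nat \<Rightarrow> nat set \<Rightarrow> nat" where
  "outdeg n A = card {b \<in> {1..n} - A. insert b A \<in> QP n}"

definition qd :: "nat \<Rightarrow> int \<Rightarrow> int \<Rightarrow> nat" where
  "qd n r d = card {A \<in> QPr n r. int (outdeg n A) = d}"

end

theory Submission
  imports Defs
begin

text \<open>
Cutting a set \<open>A \<in> Q(P_n)\<close> at whether \<open>n\<close> and \<open>n - 1\<close> lie in \<open>A\<close> gives a linear recurrence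
for \<open>q_n^{r,d}\<close>, solved by \<open>q_n^{r,d} = C(r+1, k) C(n-2r, k-1)\<close> with \<open>k = n - 2r + 1 - d\<close>.
As a function of \<open>k\<close> this has ratio \<open>f(k+1)/f(k) = (a-k)(b-k)/((k+1)k)\<close> with \<open>a = r+1\<close>,
\<open>b = n-2r+1\<close>. Vandermonde gives \<open>q_n^r = C(n-r+1, r)\<close>, and the ratio \<open>q_n^{r+1}/q_n^r\<close> places
the maximiser \<open>r_\<star>\<close> in \<open>(n/4 - 1, 8n/25 + 1)\<close>; so for \<open>|r - r_\<star>| \<le> \<surd>(n log n)\<close> both \<open>a\<close>
and \<open>b\<close>, and hence the mode \<open>k_0\<close>, are of order \<open>n\<close>. Then for \<open>i \<le> j\<close> the ratio just below
\<open>k_0\<close> is at most \<open>1 + O(j/n)\<close>, so the \<open>\<surd>n/40\<close> terms below the mode all exceed \<open>f(k_0)/3\<close>;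
and beyond distance \<open>j \<approx> \<surd>k_0\<close> from the mode the terms decay geometrically, so the whole sum
is \<open>O(\<surd>n f(k_0))\<close>. For \<open>n < 4 \<cdot> 10\<^sup>8\<close> the trivial bounds
\<open>q_n^{r,d_\<star>} \<le> q_n^r \<le> (n+1) q_n^{r,d_\<star>}\<close> suffice.
\<close>

lemma QP_subset: "A \<in> QP n \<Longrightarrow> A \<subseteq> {1..n}"
  by (simp add: QP_def)

lemma finite_QP: "finite (QP n)"
proof -
  have "QP n \<subseteq> Pow {1..n}" by (auto simp: QP_def)
  thus ?thesis using finite_subset by blast
qed

lemma finite_QPr: "finite (QPr n r)"
  unfolding QPr_def using finite_QP by (rule finite_subset[rotated]) auto

lemma QP_0: "QP 0 = {{}}"
  by (auto simp: QP_def)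

definition free_slots :: "nat \<Rightarrow> nat set \<Rightarrow> nat set" where
  "free_slots n A = {b \<in> {1..n}. b \<notin> A \<and> Suc b \<notin> A \<and> b - 1 \<notin> A}"

lemma outdeg_eq_card_free_slots:
  assumes "A \<in> QP n"
  shows "outdeg n A = card (free_slots n A)"
proof -
  have "{b \<in> {1..n} - A. insert b A \<in> QP n} = free_slots n A"
  proof (rule set_eqI, rule iffI)
    fix b assume "b \<in> {b \<in> {1..n} - A. insert b A \<in> QP n}"
    then have b: "b \<in> {1..n}" "b \<notin> A" "insert b A \<in> QP n" by auto
    have "Suc b \<notin> A" using b(3) by (auto simp: QP_def)
    moreover have "b - 1 \<notin> A"
    proof
      assume "b - 1 \<in> A"
      moreover have "Suc (b - 1) = b" using b(1) by auto
      ultimately show False using b(3) unfolding QP_def by blast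
    qed
    ultimately show "b \<in> free_slots n A" using b by (simp add: free_slots_def)
  next
    fix b assume "b \<in> free_slots n A"
    then have b: "b \<in> {1..n}" "b \<notin> A" "Suc b \<notin> A" "b - 1 \<notin> A"
      by (auto simp: free_slots_def)
    have "Suc i \<noteq> b" if "i \<in> A" for i using b(4) that by auto
    hence "insert b A \<in> QP n" using b assms by (auto simp: QP_def)
    thus "b \<in> {b \<in> {1..n} - A. insert b A \<in> QP n}" using b by auto
  qed
  thus ?thesis by (simp add: outdeg_def)
qed

lemma outdeg_le:
  assumes "A \<in> QP n"
  shows "outdeg n A \<le> n"
proof -
  have "card (free_slots n A) \<le> card {1..n}" by (rule card_mono) (auto simp: free_slots_def)
  thus ?thesis using outdeg_eq_card_free_slots[OF assms] by simp
qed

lemma free_slots_insert_Suc_Suc: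
  "A \<subseteq> {1..p} \<Longrightarrow> free_slots (Suc (Suc p)) (insert (Suc (Suc p)) A) = free_slots p A"
  by (auto simp: free_slots_def)

lemma free_slots_Suc:
  "A \<subseteq> {1..p} \<Longrightarrow> free_slots (Suc p) A = free_slots p A \<union> (if p \<in> A then {} else {Suc p})"
  by (auto simp: free_slots_def le_Suc_eq)

lemma outdeg_Suc:
  assumes "A \<in> QP p"
  shows "outdeg (Suc p) A = outdeg p A + (if p \<in> A then 0 else 1)"
proof -
  have "A \<in> QP (Suc p)" using assms by (auto simp: QP_def)
  note outdeg_eq_card_free_slots[OF this]
  moreover have "finite (free_slots p A)" "Suc p \<notin> free_slots p A"
    by (simp_all add: free_slots_def)
  ultimately show ?thesis
    using outdeg_eq_card_free_slots[OF assms] free_slots_Suc[OF QP_subset[OF assms]] by auto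
qed

definition qd_last_in :: "nat \<Rightarrow> int \<Rightarrow> int \<Rightarrow> nat" where
  "qd_last_in n r d = card {A \<in> QPr n r. int (outdeg n A) = d \<and> n \<in> A}"

definition qd_last_out :: "nat \<Rightarrow> int \<Rightarrow> int \<Rightarrow> nat" where
  "qd_last_out n r d = card {A \<in> QPr n r. int (outdeg n A) = d \<and> n \<notin> A}"

lemma qd_eq_last_in_plus_last_out: "qd n r d = qd_last_in n r d + qd_last_out n r d"
proof -
  have "{A \<in> QPr n r. int (outdeg n A) = d} =
      {A \<in> QPr n r. int (outdeg n A) = d \<and> n \<in> A} \<union> {A \<in> QPr n r. int (outdeg n A) = d \<and> n \<notin> A}"
    by auto
  thus ?thesis unfolding qd_def qd_last_in_def qd_last_out_def
    by (simp only:) (rule card_Un_disjoint; auto intro: finite_subset[OF _ finite_QPr])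
qed

lemma qd_last_in_Suc_Suc: "qd_last_in (Suc (Suc p)) r d = qd p (r - 1) d"
proof -
  let ?S = "{A \<in> QPr p (r - 1). int (outdeg p A) = d}"
  let ?top = "Suc (Suc p)"
  have "{A \<in> QPr ?top r. int (outdeg ?top A) = d \<and> ?top \<in> A} = insert ?top ` ?S"
  proof (rule set_eqI, rule iffI)
    fix A assume A: "A \<in> {A \<in> QPr ?top r. int (outdeg ?top A) = d \<and> ?top \<in> A}"
    let ?A0 = "A - {?top}"
    have AQ: "A \<in> QP ?top" and top: "?top \<in> A" using A by (auto simp: QPr_def)
    have "Suc p \<notin> A" using AQ top by (auto simp: QP_def)
    hence sub: "?A0 \<subseteq> {1..p}" using QP_subset[OF AQ] by (auto simp: le_Suc_eq)
    have A0Q: "?A0 \<in> QP p" using sub AQ by (auto simp: QP_def)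
    have Aeq: "A = insert ?top ?A0" using top by auto
    have "finite ?A0" using sub finite_subset by blast
    hence "card A = Suc (card ?A0)" using Aeq by (metis card_insert_disjoint Diff_iff singletonI)
    moreover have "outdeg ?top A = outdeg p ?A0"
      using outdeg_eq_card_free_slots[OF AQ] outdeg_eq_card_free_slots[OF A0Q]
        free_slots_insert_Suc_Suc[OF sub] Aeq by simp
    ultimately have "?A0 \<in> ?S" using A A0Q by (auto simp: QPr_def)
    thus "A \<in> insert ?top ` ?S" using Aeq by blast
  next
    fix A assume "A \<in> insert ?top ` ?S"
    then obtain A0 where A0: "A0 \<in> ?S" and Aeq: "A = insert ?top A0" by blast
    have A0Q: "A0 \<in> QP p" using A0 by (auto simp: QPr_def)
    have sub: "A0 \<subseteq> {1..p}" using QP_subset[OF A0Q] .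
    have AQ: "A \<in> QP ?top" using A0Q sub unfolding Aeq QP_def by auto
    have "finite A0" "?top \<notin> A0" using sub finite_subset by auto
    hence "card A = Suc (card A0)" using Aeq by simp
    moreover have "outdeg ?top A = outdeg p A0"
      using outdeg_eq_card_free_slots[OF AQ] outdeg_eq_card_free_slots[OF A0Q]
        free_slots_insert_Suc_Suc[OF sub] Aeq by simp
    ultimately show "A \<in> {A \<in> QPr ?top r. int (outdeg ?top A) = d \<and> ?top \<in> A}"
      using A0 AQ Aeq by (auto simp: QPr_def)
  qed
  moreover have "inj_on (insert ?top) ?S"
  proof (rule inj_onI)
    fix X Y assume "X \<in> ?S" "Y \<in> ?S" "insert ?top X = insert ?top Y"
    moreover have "?top \<notin> X" "?top \<notin> Y" using \<open>X \<in> ?S\<close> \<open>Y \<in> ?S\<close>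
      by (auto simp: QPr_def QP_def)
    ultimately show "X = Y" by (metis insert_ident)
  qed
  ultimately show ?thesis unfolding qd_last_in_def qd_def by (simp add: card_image)
qed

lemma qd_last_out_Suc: "qd_last_out (Suc p) r d = qd_last_in p r d + qd_last_out p r (d - 1)"
proof -
  have QP_Suc: "(A \<in> QP (Suc p) \<and> Suc p \<notin> A) = (A \<in> QP p)" for A
    by (auto simp: QP_def le_Suc_eq)
  have "{A \<in> QPr (Suc p) r. int (outdeg (Suc p) A) = d \<and> Suc p \<notin> A}
    = {A \<in> QPr p r. int (outdeg p A) = d \<and> p \<in> A} \<union>
      {A \<in> QPr p r. int (outdeg p A) = d - 1 \<and> p \<notin> A}"
  proof (rule set_eqI)
    fix A
    show "A \<in> {A \<in> QPr (Suc p) r. int (outdeg (Suc p) A) = d \<and> Suc p \<notin> A} \<longleftrightarrow>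
      A \<in> {A \<in> QPr p r. int (outdeg p A) = d \<and> p \<in> A} \<union>
        {A \<in> QPr p r. int (outdeg p A) = d - 1 \<and> p \<notin> A}"
    proof (cases "A \<in> QP p")
      case True
      then show ?thesis using outdeg_Suc[OF True] QP_Suc[of A] by (cases "p \<in> A") (auto simp: QPr_def)
    next
      case False
      then show ?thesis using QP_Suc[of A] by (auto simp: QPr_def)
    qed
  qed
  thus ?thesis unfolding qd_last_out_def qd_last_in_def
    by (simp only:) (rule card_Un_disjoint; auto intro: finite_subset[OF _ finite_QPr])
qed

lemma qd_last_in_0: "qd_last_in 0 r d = 0"
  by (simp add: qd_last_in_def QPr_def QP_0)

lemma qd_last_out_0: "qd_last_out 0 r d = (if r = 0 \<and> d = 0 then 1 else 0)"
proof -
  have "outdeg 0 {} = 0" by (simp add: outdeg_def)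
  hence "{A \<in> QPr 0 r. int (outdeg 0 A) = d \<and> 0 \<notin> A} = (if r = 0 \<and> d = 0 then {{}} else {})"
    by (auto simp: QPr_def QP_0)
  thus ?thesis by (simp add: qd_last_out_def)
qed

lemma qd_last_in_1: "qd_last_in (Suc 0) r d = (if r = 1 \<and> d = 0 then 1 else 0)"
proof -
  have "{1::nat} \<in> QP 1" by (auto simp: QP_def)
  moreover have "free_slots 1 {1} = {}" by (auto simp: free_slots_def)
  ultimately have deg: "outdeg 1 {1} = 0" using outdeg_eq_card_free_slots by simp
  have "{A \<in> QP 1. 1 \<in> A} = {{1}}" by (auto simp: QP_def)
  hence "{A \<in> QPr 1 r. int (outdeg 1 A) = d \<and> 1 \<in> A}
      = {A \<in> {{1}}. int (card A) = r \<and> int (outdeg 1 A) = d}"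
    unfolding QPr_def by blast
  also have "\<dots> = (if r = 1 \<and> d = 0 then {{1}} else {})" using deg by auto
  finally show ?thesis by (simp add: qd_last_in_def)
qed

lemma qd_0: "qd 0 r d = (if r = 0 \<and> d = 0 then 1 else 0)"
  by (simp add: qd_eq_last_in_plus_last_out qd_last_in_0 qd_last_out_0)

lemma qd_1: "qd 1 r d = (if r = 1 \<and> d = 0 then 1 else 0) + (if r = 0 \<and> d = 1 then 1 else 0)"
proof -
  have "qd 1 r d = qd_last_in (Suc 0) r d + qd_last_out (Suc 0) r d"
    using qd_eq_last_in_plus_last_out[of 1 r d] by simp
  also have "qd_last_out (Suc 0) r d = qd_last_in 0 r d + qd_last_out 0 r (d - 1)"
    by (rule qd_last_out_Suc)
  finally show ?thesis by (simp add: qd_last_in_1 qd_last_in_0 qd_last_out_0)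
qed

lemma qd_2: "qd 2 r d = 2 * (if r = 1 \<and> d = 0 then 1 else 0) + (if r = 0 \<and> d = 2 then 1 else 0)"
proof -
  have "qd 2 r d = qd_last_in (Suc (Suc 0)) r d + qd_last_out (Suc (Suc 0)) r d"
    using qd_eq_last_in_plus_last_out[of 2 r d] by (simp add: numeral_2_eq_2)
  also have "qd_last_in (Suc (Suc 0)) r d = qd 0 (r - 1) d" by (rule qd_last_in_Suc_Suc)
  also have "qd_last_out (Suc (Suc 0)) r d = qd_last_in (Suc 0) r d + qd_last_out (Suc 0) r (d - 1)"
    by (rule qd_last_out_Suc)
  also have "qd_last_out (Suc 0) r (d - 1) = qd_last_in 0 r (d - 1) + qd_last_out 0 r (d - 1 - 1)"
    by (rule qd_last_out_Suc)
  finally show ?thesis by (simp add: qd_0 qd_last_in_1 qd_last_in_0 qd_last_out_0)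
qed

lemma qd_recurrence:
  "qd (Suc (Suc (Suc p))) r d + qd p (r - 1) (d - 1)
   = qd (Suc p) (r - 1) d + qd p (r - 1) d + qd (Suc (Suc p)) r (d - 1)"
proof -
  have "qd (Suc (Suc (Suc p))) r d
      = qd_last_in (Suc (Suc (Suc p))) r d + qd_last_out (Suc (Suc (Suc p))) r d"
    by (rule qd_eq_last_in_plus_last_out)
  also have "qd_last_out (Suc (Suc (Suc p))) r d
      = qd_last_in (Suc (Suc p)) r d + qd_last_out (Suc (Suc p)) r (d - 1)"
    by (rule qd_last_out_Suc)
  finally have "qd (Suc (Suc (Suc p))) r d
      = qd (Suc p) (r - 1) d + qd p (r - 1) d + qd_last_out (Suc (Suc p)) r (d - 1)"
    by (simp add: qd_last_in_Suc_Suc)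
  moreover have "qd (Suc (Suc p)) r (d - 1)
      = qd p (r - 1) (d - 1) + qd_last_out (Suc (Suc p)) r (d - 1)"
    by (simp add: qd_eq_last_in_plus_last_out qd_last_in_Suc_Suc)
  ultimately show ?thesis by simp
qed

text \<open>\<open>compositions m k\<close> is the number of compositions of \<open>m\<close> into \<open>k\<close> positive parts. Both
factors of \<open>qd_formula\<close> are 0 outside their natural range, so that \<open>qd_formula\<close> satisfies the
recurrence of \<open>qd\<close> for all integers \<open>r\<close>, \<open>d\<close>.\<close>
definition int_choose :: "int \<Rightarrow> int \<Rightarrow> nat" where
  "int_choose x y = (if 0 \<le> y \<and> y \<le> x then nat x choose nat y else 0)"

definition compositions :: "int \<Rightarrow> int \<Rightarrow> nat" where
  "compositions m k =
    (if m = 0 \<and> k = 0 then 1 else if 1 \<le> k \<and> k \<le> m then nat (m - 1) choose nat (k - 1) else 0)"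

definition qd_formula :: "nat \<Rightarrow> int \<Rightarrow> int \<Rightarrow> nat" where
  "qd_formula n r d =
    int_choose (r + 1) (int n - 2 * r + 1 - d) * compositions (int n - 2 * r + 1) (int n - 2 * r + 1 - d)"

lemma int_ge1_obtain: "1 \<le> (m::int) \<Longrightarrow> \<exists>M. m = int M + 1"
  by (rule exI[of _ "nat (m - 1)"]) simp

lemma int_choose_of_nat: "int_choose (int a) (int b) = a choose b"
  by (auto simp: int_choose_def binomial_eq_0)

lemma int_choose_neg: "y < 0 \<Longrightarrow> int_choose x y = 0"
  by (simp add: int_choose_def)

lemma int_choose_neg_top: "x < 0 \<Longrightarrow> int_choose x y = 0"
  by (simp add: int_choose_def)

lemma int_choose_pascal:
  assumes "0 \<le> r"
  shows "int_choose (r + 1) k = int_choose r k + int_choose r (k - 1)"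
proof -
  obtain R where R: "r = int R" using assms nonneg_int_cases by blast
  consider "k < 0" | "k = 0" | K where "k = int K + 1"
    using int_ge1_obtain[of k] by fastforce
  then show ?thesis
  proof cases
    case 3
    have "int_choose (r + 1) k = Suc R choose Suc K"
      using R 3 int_choose_of_nat[of "Suc R" "Suc K"] by (simp add: add.commute)
    also have "\<dots> = (R choose K) + (R choose Suc K)" by simp
    finally show ?thesis
      using R 3 int_choose_of_nat[of R K] int_choose_of_nat[of R "Suc K"] by (simp add: add.commute)
  qed (auto simp: int_choose_def R)
qed

lemma compositions_of_nat: "compositions (int M + 1) (int K + 1) = M choose K"
  by (cases "K \<le> M") (auto simp: compositions_def binomial_eq_0)

lemma compositions_pascal:
  assumes "1 \<le> m" "1 \<le> k"
  shows "compositions m k = compositions (m - 1) (k - 1) + compositions (m - 1) k"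
proof -
  obtain M where M: "m = int M + 1" using int_ge1_obtain[OF assms(1)] by blast
  obtain K where K: "k = int K + 1" using int_ge1_obtain[OF assms(2)] by blast
  show ?thesis
  proof (cases "M = 0 \<or> K = 0")
    case True
    then show ?thesis using M K by (auto simp: compositions_def)
  next
    case False
    then obtain M' K' where "M = Suc M'" "K = Suc K'" by (metis not0_implies_Suc)
    then have mk: "m = int (Suc M') + 1" "m - 1 = int M' + 1" "k = int (Suc K') + 1" "k - 1 = int K' + 1"
      using M K by simp_all
    have "compositions m k = Suc M' choose Suc K'" unfolding mk by (rule compositions_of_nat)
    also have "\<dots> = (M' choose K') + (M' choose Suc K')" by simp
    finally show ?thesis unfolding mk(2,4) using compositions_of_nat[of M' "Suc K'"] mk
      by (simp add: compositions_of_nat)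
  qed
qed

lemma qd_formula_summand_recurrence:
  assumes "4 \<le> m + 2 * r"
  shows "int_choose (r + 1) k * compositions m k + int_choose r k * compositions (m - 1) k
       = int_choose r k * compositions m k + int_choose r (k - 1) * compositions (m - 1) (k - 1)
         + int_choose (r + 1) k * compositions (m - 1) k"
proof (cases "0 \<le> r")
  case True
  have "int_choose r (k - 1) * compositions m k
      = int_choose r (k - 1) * (compositions (m - 1) (k - 1) + compositions (m - 1) k)"
  proof (cases "k \<le> 0 \<or> m \<le> 0")
    case True
    then show ?thesis by (auto simp: int_choose_neg compositions_def)
  next
    case False
    then show ?thesis using compositions_pascal[of m k] by simp
  qed
  then show ?thesis unfolding int_choose_pascal[OF True] by (simp add: algebra_simps)
next
  case False
  then have "r + 1 < 0 \<or> r = -1" by auto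
  then show ?thesis using False assms
    by (auto simp: int_choose_def compositions_def int_choose_neg_top)
qed

lemma qd_formula_recurrence:
  "qd_formula (Suc (Suc (Suc p))) r d + qd_formula p (r - 1) (d - 1)
   = qd_formula (Suc p) (r - 1) d + qd_formula p (r - 1) d + qd_formula (Suc (Suc p)) r (d - 1)"
proof -
  define m where "m = int p - 2 * r + 4"
  define k where "k = m - d"
  have "4 \<le> m + 2 * r" unfolding m_def by simp
  note qd_formula_summand_recurrence[OF this, of k]
  moreover have
    "qd_formula (Suc (Suc (Suc p))) r d = int_choose (r + 1) k * compositions m k"
    "qd_formula p (r - 1) (d - 1) = int_choose r k * compositions (m - 1) k"
    "qd_formula (Suc p) (r - 1) d = int_choose r k * compositions m k"
    "qd_formula p (r - 1) d = int_choose r (k - 1) * compositions (m - 1) (k - 1)"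
    "qd_formula (Suc (Suc p)) r (d - 1) = int_choose (r + 1) k * compositions (m - 1) k"
    unfolding qd_formula_def m_def k_def by (simp_all add: algebra_simps)
  ultimately show ?thesis by simp
qed

lemma qd_formula_0: "qd_formula 0 r d = (if r = 0 \<and> d = 0 then 1 else 0)"
  unfolding qd_formula_def int_choose_def compositions_def by (auto; presburger)

lemma qd_formula_1:
  "qd_formula 1 r d = (if r = 1 \<and> d = 0 then 1 else 0) + (if r = 0 \<and> d = 1 then 1 else 0)"
  unfolding qd_formula_def int_choose_def compositions_def by (auto; presburger)

lemma qd_formula_2:
  "qd_formula 2 r d = 2 * (if r = 1 \<and> d = 0 then 1 else 0) + (if r = 0 \<and> d = 2 then 1 else 0)"
  unfolding qd_formula_def int_choose_def compositions_def by (auto; presburger)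

lemma qd_eq_qd_formula: "qd n r d = qd_formula n r d"
proof (induction n arbitrary: r d rule: less_induct)
  case (less n)
  show ?case
  proof (cases "n \<le> 2")
    case True
    then consider "n = 0" | "n = 1" | "n = 2" by linarith
    then show ?thesis by cases (simp_all only: qd_0 qd_1 qd_2 qd_formula_0 qd_formula_1 qd_formula_2)
  next
    case False
    then obtain p where p: "n = Suc (Suc (Suc p))"
      by (metis add_2_eq_Suc less_natE not_le_imp_less numeral_2_eq_2)
    have "qd n r d + qd p (r - 1) (d - 1) = qd_formula n r d + qd_formula p (r - 1) (d - 1)"
      unfolding p qd_recurrence qd_formula_recurrence using less p by simp
    moreover have "qd p (r - 1) (d - 1) = qd_formula p (r - 1) (d - 1)" using less p by simp
    ultimately show ?thesis by simp
  qed
qed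

lemma sum_qd_eq_card:
  "finite D \<Longrightarrow> (\<Sum>d\<in>D. qd n r d) = card (\<Union>d\<in>D. {A \<in> QPr n r. int (outdeg n A) = d})"
  unfolding qd_def by (rule card_UN_disjoint[symmetric]) (auto intro: finite_subset[OF _ finite_QPr])

lemma sum_qd_le_q: "finite D \<Longrightarrow> (\<Sum>d\<in>D. qd n r d) \<le> q n r"
  unfolding sum_qd_eq_card q_def by (rule card_mono[OF finite_QPr]) auto

lemma q_eq_sum_qd: "q n r = (\<Sum>d\<in>{0..int n}. qd n r d)"
proof -
  have "(\<Union>d\<in>{0..int n}. {A \<in> QPr n r. int (outdeg n A) = d}) = QPr n r"
    using outdeg_le by (auto simp: QPr_def)
  thus ?thesis unfolding sum_qd_eq_card[OF finite_atLeastAtMost_int] q_def by simp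
qed

lemma q_le_card_mul_qd_max:
  assumes "\<forall>d'. qd n r d' \<le> qd n r ds"
  shows "q n r \<le> (n + 1) * qd n r ds"
proof -
  have "q n r \<le> card {0..int n} * qd n r ds"
    unfolding q_eq_sum_qd using sum_bounded_above[of "{0..int n}" "qd n r" "qd n r ds"] assms by simp
  also have "card {0..int n} = n + 1" by simp
  finally show ?thesis .
qed

definition choose_pair :: "nat \<Rightarrow> nat \<Rightarrow> nat \<Rightarrow> nat" where
  "choose_pair a M k = (if k = 0 then 0 else (a choose k) * (M choose (k - 1)))"

lemma qd_eq_choose_pair:
  assumes r: "0 \<le> r" and rn: "2 * r \<le> int n"
  shows "qd n r d = choose_pair (nat (r + 1)) (nat (int n - 2 * r)) (nat (int n - 2 * r + 1 - d))"
proof -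
  define m where "m = int n - 2 * r + 1"
  have qd: "qd n r d = int_choose (r + 1) (m - d) * compositions m (m - d)"
    unfolding qd_eq_qd_formula qd_formula_def m_def by simp
  show ?thesis
  proof (cases "m - d \<le> 0")
    case True
    hence "int_choose (r + 1) (m - d) * compositions m (m - d) = 0"
      using rn by (cases "m - d = 0") (auto simp: int_choose_neg compositions_def m_def)
    thus ?thesis using qd True by (simp add: choose_pair_def m_def)
  next
    case False
    obtain R where R: "r = int R" using r nonneg_int_cases by blast
    obtain K where K: "m - d = int K + 1" using False int_ge1_obtain[of "m - d"] by auto
    obtain M where M: "m = int M + 1" using rn int_ge1_obtain[of m] unfolding m_def by auto
    have "int_choose (r + 1) (m - d) = Suc R choose Suc K"
      using R K int_choose_of_nat[of "Suc R" "Suc K"] by (simp add: add.commute)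
    moreover have "compositions m (m - d) = M choose K"
      unfolding K unfolding M by (rule compositions_of_nat)
    moreover have "nat (r + 1) = Suc R" "nat (int n - 2 * r) = M" "nat (int n - 2 * r + 1 - d) = Suc K"
      using R M K m_def by auto
    ultimately show ?thesis using qd by (simp add: choose_pair_def)
  qed
qed

lemma Suc_mult_choose_Suc: "Suc k * (n choose Suc k) = (n - k) * (n choose k)"
  using binomial_absorption[of k n] binomial_absorb_comp[of n k] by simp

lemma choose_pair_ratio:
  assumes "1 \<le> k"
  shows "choose_pair a M (k + 1) * (k + 1) * k = choose_pair a M k * (a - k) * (M + 1 - k)"
proof -
  obtain K where K: "k = Suc K" using assms by (cases k) auto
  have a: "(k + 1) * (a choose (k + 1)) = (a - k) * (a choose k)" using Suc_mult_choose_Suc[of k a] by simp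
  have M: "k * (M choose k) = (M + 1 - k) * (M choose (k - 1))" using Suc_mult_choose_Suc[of K M] K by simp
  have t1: "choose_pair a M (k + 1) = (a choose (k + 1)) * (M choose k)" using K by (simp add: choose_pair_def)
  have t2: "choose_pair a M k = (a choose k) * (M choose (k - 1))" using K by (simp add: choose_pair_def)
  have "choose_pair a M (k + 1) * (k + 1) * k = ((k + 1) * (a choose (k + 1))) * (k * (M choose k))"
    unfolding t1 by (simp only: mult_ac)
  also have "\<dots> = choose_pair a M k * (a - k) * (M + 1 - k)" unfolding a M t2 by (simp only: mult_ac)
  finally show ?thesis .
qed

lemma choose_pair_pos_imp: "0 < choose_pair a M k \<Longrightarrow> 1 \<le> k \<and> k \<le> a \<and> k \<le> M + 1"
  by (auto simp: choose_pair_def split: if_splits)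

lemma q_eq_sum_choose_pair:
  assumes r: "0 \<le> r" and rn: "2 * r \<le> int n"
  shows "q n r = (\<Sum>k\<in>{1..nat (int n - 2 * r + 1)}. choose_pair (nat (r + 1)) (nat (int n - 2 * r)) k)"
proof -
  define m where "m = int n - 2 * r + 1"
  define f where "f = choose_pair (nat (r + 1)) (nat (int n - 2 * r))"
  have "q n r = (\<Sum>d\<in>{0..int n}. f (nat (m - d)))"
    unfolding q_eq_sum_qd f_def m_def using qd_eq_choose_pair[OF r rn] by simp
  also have "\<dots> = (\<Sum>d\<in>{0..m - 1}. f (nat (m - d)))"
    by (rule sum.mono_neutral_right) (use r m_def in \<open>auto simp: f_def choose_pair_def\<close>)
  also have "\<dots> = (\<Sum>k\<in>{1..nat m}. f k)"
    by (rule sum.reindex_bij_witness[of _ "\<lambda>k. m - int k" "\<lambda>d. nat (m - d)"]) (use rn m_def in auto)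
  finally show ?thesis unfolding f_def m_def .
qed

lemma q_neg: "r < 0 \<Longrightarrow> q n r = 0"
  by (simp add: q_def QPr_def)

lemma q_eq_choose:
  assumes r: "0 \<le> r" and rn: "2 * r \<le> int n"
  shows "q n r = nat (int n - r + 1) choose nat r"
proof -
  obtain R where R: "r = int R" using r nonneg_int_cases by blast
  define M where "M = nat (int n - 2 * r)"
  define g where "g t = (M choose t) * ((R + 1) choose (t + 1))" for t
  have "q n r = (\<Sum>k\<in>{1..M + 1}. choose_pair (R + 1) M k)"
    using q_eq_sum_choose_pair[OF r rn] rn R unfolding M_def by (simp add: nat_add_distrib)
  also have "\<dots> = (\<Sum>t\<in>{0..M}. g t)"
    by (rule sum.reindex_bij_witness[of _ Suc "\<lambda>k. k - 1"]) (auto simp: choose_pair_def g_def)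
  also have "\<dots> = (\<Sum>t\<in>{0..M + R}. g t)"
    by (rule sum.mono_neutral_left) (auto simp: g_def binomial_eq_0)
  also have "\<dots> = (\<Sum>t\<le>R. g t)"
    by (rule sum.mono_neutral_right) (auto simp: g_def binomial_eq_0)
  also have "\<dots> = (\<Sum>t\<le>R. (M choose t) * ((R + 1) choose (R - t)))"
  proof (rule sum.cong)
    fix t assume "t \<in> {..R}"
    then have "(R + 1) choose (t + 1) = (R + 1) choose (R + 1 - (t + 1))"
      by (intro binomial_symmetric) simp
    then show "g t = (M choose t) * ((R + 1) choose (R - t))" unfolding g_def by simp
  qed simp
  also have "\<dots> = (M + (R + 1)) choose R" by (rule vandermonde)
  also have "M + (R + 1) = nat (int n - r + 1)" using rn R unfolding M_def by simp
  finally show ?thesis using R by simp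
qed

lemma q_1: "2 \<le> n \<Longrightarrow> q n 1 = n"
  using q_eq_choose[of 1 n] by simp

lemma q_le_1_if_n_less_twice:
  assumes "int n < 2 * r"
  shows "q n r \<le> 1"
proof -
  have "qd n r d \<le> (if d = 0 then 1 else 0)" for d
    using assms unfolding qd_eq_qd_formula qd_formula_def int_choose_def compositions_def by auto
  hence "q n r \<le> (\<Sum>d\<in>{0..int n}. (if d = 0 then 1 else 0))"
    unfolding q_eq_sum_qd by (intro sum_mono) auto
  thus ?thesis by (simp add: sum.delta')
qed

text \<open>A sequence with the ratio of \<open>k \<mapsto> C(a, k) C(b - 1, k - 1)\<close> and a maximum at \<open>k0\<close>.\<close>
locale ratio_mode =
  fixes f :: "nat \<Rightarrow> nat" and a b k0 :: nat
  assumes ratio: "\<And>k. 1 \<le> k \<Longrightarrow> f (k + 1) * (k + 1) * k = f k * (a - k) * (b - k)"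
    and le_mode: "\<And>k. f k \<le> f k0"
    and mode_pos: "0 < f k0"
    and mode_ge_1: "1 \<le> k0"
begin

lemma ratio_at_mode: "(a - k0) * (b - k0) \<le> (k0 + 1) * k0"
proof -
  have "f k0 * ((a - k0) * (b - k0)) = f (k0 + 1) * ((k0 + 1) * k0)"
    using ratio[OF mode_ge_1] by (simp only: mult.assoc)
  also have "\<dots> \<le> f k0 * ((k0 + 1) * k0)" using le_mode[of "k0 + 1"] by (rule mult_right_mono) simp
  finally show ?thesis using mode_pos by simp
qed

lemma ratio_below_mode:
  assumes "2 \<le> k0"
  shows "k0 * (k0 - 1) \<le> (a - (k0 - 1)) * (b - (k0 - 1))"
proof -
  have e: "k0 - 1 + 1 = k0" using assms by simp
  have "f k0 * (k0 * (k0 - 1)) = f (k0 - 1) * ((a - (k0 - 1)) * (b - (k0 - 1)))"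
    using ratio[of "k0 - 1"] assms e by (simp only: mult.assoc)
  also have "\<dots> \<le> f k0 * ((a - (k0 - 1)) * (b - (k0 - 1)))" using le_mode[of "k0 - 1"] by (rule mult_right_mono) simp
  finally show ?thesis using mode_pos by simp
qed

lemma step_above_mode:
  assumes "k0 + j \<le> k"
  shows "f (k + 1) * (k0 + j + 1) \<le> f k * (k0 + 1)"
proof -
  have k1: "1 \<le> k" using assms mode_ge_1 by simp
  have A: "(a - k) * (b - k) \<le> (a - k0) * (b - k0)" using assms by (intro mult_le_mono) auto
  have B: "(k0 + j + 1) * k0 \<le> (k + 1) * k" using assms by (intro mult_le_mono) auto
  have "f (k + 1) * ((k0 + j + 1) * k0) \<le> f (k + 1) * ((k + 1) * k)" using B by simp
  also have "\<dots> = f k * ((a - k) * (b - k))" using ratio[OF k1] by (simp only: mult.assoc)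
  also have "\<dots> \<le> f k * ((k0 + 1) * k0)" using le_trans[OF A ratio_at_mode] by simp
  finally have "(f (k + 1) * (k0 + j + 1)) * k0 \<le> (f k * (k0 + 1)) * k0" by (simp only: mult.assoc)
  moreover have "0 < k0" using mode_ge_1 by simp
  ultimately show ?thesis by (auto simp only: mult_le_cancel2)
qed

lemma step_below_mode:
  assumes "1 \<le> k" "k + j + 1 \<le> k0"
  shows "f k * k0 \<le> f (k + 1) * (k0 - j)"
proof -
  have k2: "2 \<le> k0" using assms by simp
  have A: "(a - (k0 - 1)) * (b - (k0 - 1)) \<le> (a - k) * (b - k)" using assms by (intro mult_le_mono) auto
  have B: "(k + 1) * k \<le> (k0 - j) * (k0 - 1)" using assms by (intro mult_le_mono) auto
  have "f k * (k0 * (k0 - 1)) \<le> f k * ((a - k) * (b - k))" using le_trans[OF ratio_below_mode[OF k2] A] by simp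
  also have "\<dots> = f (k + 1) * ((k + 1) * k)" using ratio[OF assms(1)] by (simp only: mult.assoc)
  also have "\<dots> \<le> f (k + 1) * ((k0 - j) * (k0 - 1))" using B by simp
  finally have "(f k * k0) * (k0 - 1) \<le> (f (k + 1) * (k0 - j)) * (k0 - 1)" by (simp only: mult.assoc)
  moreover have "0 < k0 - 1" using k2 by simp
  ultimately show ?thesis by (auto simp only: mult_le_cancel2)
qed

lemma sum_above_mode:
  assumes "k0 + j \<le> L"
  shows "j * (\<Sum>k\<in>{k0 + j..L}. f k) + (k0 + 1) * f L \<le> (k0 + j + 1) * f (k0 + j)"
  using assms
proof (induction L rule: dec_induct)
  case base
  then show ?case by (simp add: algebra_simps)
next
  case (step L)
  have "j * (\<Sum>k\<in>{k0 + j..Suc L}. f k) + (k0 + 1) * f (Suc L)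
      = j * (\<Sum>k\<in>{k0 + j..L}. f k) + (k0 + j + 1) * f (L + 1)"
    using step.hyps by (simp add: algebra_simps)
  also have "\<dots> \<le> j * (\<Sum>k\<in>{k0 + j..L}. f k) + (k0 + 1) * f L"
    using step_above_mode[of j L] step.hyps by (simp add: mult.commute)
  finally show ?case using step.IH by linarith
qed

lemma sum_below_mode: "K + j + 1 \<le> k0 \<Longrightarrow> j * (\<Sum>k\<in>{1..K}. f k) \<le> (k0 - j) * f (K + 1)"
proof (induction K)
  case 0
  then show ?case by simp
next
  case (Suc K)
  have "j * (\<Sum>k\<in>{1..Suc K}. f k) = j * (\<Sum>k\<in>{1..K}. f k) + j * f (K + 1)" by (simp add: distrib_left)
  also have "\<dots> \<le> (k0 - j) * f (K + 1) + j * f (K + 1)" using Suc by simp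
  also have "\<dots> = f (K + 1) * k0" using Suc.prems by (simp add: algebra_simps)
  also have "\<dots> \<le> f (Suc K + 1) * (k0 - j)" using step_below_mode[of "K + 1" j] Suc.prems by simp
  finally show ?case by (simp add: mult.commute)
qed

lemma sum_far_below_mode:
  "j * (\<Sum>k\<in>{k \<in> {1..L}. k + j + 1 \<le> k0}. f k) \<le> k0 * f k0"
proof (cases "j + 1 \<le> k0")
  case True
  have "{k \<in> {1..L}. k + j + 1 \<le> k0} \<subseteq> {1..k0 - j - 1}" by auto
  hence "j * (\<Sum>k\<in>{k \<in> {1..L}. k + j + 1 \<le> k0}. f k) \<le> j * (\<Sum>k\<in>{1..k0 - j - 1}. f k)"
    by (intro mult_left_mono sum_mono2) auto
  also have "\<dots> \<le> (k0 - j) * f (k0 - j - 1 + 1)" using True by (intro sum_below_mode) simp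
  also have "\<dots> \<le> k0 * f k0" using le_mode by (intro mult_le_mono) auto
  finally show ?thesis .
next
  case False
  hence empty: "{k \<in> {1..L}. k + j + 1 \<le> k0} = {}" by auto
  show ?thesis unfolding empty by simp
qed

lemma sum_far_above_mode:
  "j * (\<Sum>k\<in>{k \<in> {1..L}. k0 + j \<le> k}. f k) \<le> (k0 + j + 1) * f k0"
proof (cases "k0 + j \<le> L")
  case True
  have "{k \<in> {1..L}. k0 + j \<le> k} = {k0 + j..L}" using mode_ge_1 by auto
  hence "j * (\<Sum>k\<in>{k \<in> {1..L}. k0 + j \<le> k}. f k) \<le> (k0 + j + 1) * f (k0 + j)"
    using sum_above_mode[OF True] by simp
  also have "\<dots> \<le> (k0 + j + 1) * f k0" using le_mode[of "k0 + j"] by (rule mult_left_mono) simp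
  finally show ?thesis .
next
  case False
  hence empty: "{k \<in> {1..L}. k0 + j \<le> k} = {}" by auto
  show ?thesis unfolding empty by simp
qed

lemma sum_near_mode: "(\<Sum>k\<in>{k \<in> {1..L}. \<not> k + j + 1 \<le> k0 \<and> \<not> k0 + j \<le> k}. f k) \<le> 2 * j * f k0"
proof -
  let ?near = "{k \<in> {1..L}. \<not> k + j + 1 \<le> k0 \<and> \<not> k0 + j \<le> k}"
  have "card ?near \<le> card {k0 - j..<k0 + j}" by (rule card_mono) auto
  hence card: "card ?near \<le> 2 * j" by simp
  have "sum f ?near \<le> card ?near * f k0" using sum_bounded_above[of ?near f "f k0"] le_mode by simp
  also have "\<dots> \<le> 2 * j * f k0" using card by simp
  finally show ?thesis .
qed

text \<open>The three ranges above, with a free width \<open>j\<close> to be optimised at \<open>j \<approx> \<surd>k0\<close>.\<close>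
lemma mult_sum_le_mode: "j * (\<Sum>k\<in>{1..L}. f k) \<le> (2 * k0 + j + 1 + 2 * j * j) * f k0"
proof -
  define lo where "lo = {k \<in> {1..L}. k + j + 1 \<le> k0}"
  define up where "up = {k \<in> {1..L}. k0 + j \<le> k}"
  define near where "near = {k \<in> {1..L}. \<not> k + j + 1 \<le> k0 \<and> \<not> k0 + j \<le> k}"
  have split: "{1..L} = lo \<union> (near \<union> up)" unfolding lo_def near_def up_def by auto
  have "(\<Sum>k\<in>{1..L}. f k) = sum f lo + (sum f near + sum f up)"
    unfolding split by (subst sum.union_disjoint; (subst sum.union_disjoint)?)
      (auto simp: lo_def near_def up_def)
  hence "j * (\<Sum>k\<in>{1..L}. f k) = j * sum f lo + j * sum f near + j * sum f up"
    by (simp add: algebra_simps)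
  also have "\<dots> \<le> k0 * f k0 + j * (2 * j * f k0) + (k0 + j + 1) * f k0"
    using sum_far_below_mode[of j L] sum_near_mode[of L j] sum_far_above_mode[of j L]
    unfolding lo_def near_def up_def by (intro add_mono) auto
  also have "\<dots> = (2 * k0 + j + 1 + 2 * j * j) * f k0" by (simp add: algebra_simps)
  finally show ?thesis .
qed

lemma sum_le_sqrt_mul_mode:
  assumes N: "1 \<le> N" "real k0 \<le> N"
  shows "real (\<Sum>k\<in>{1..L}. f k) \<le> 8 * sqrt N * real (f k0)"
proof -
  define j where "j = nat \<lceil>sqrt N\<rceil>"
  have sN: "1 \<le> sqrt N" using N by simp
  have j1: "sqrt N \<le> real j" unfolding j_def by linarith
  have j2: "real j \<le> sqrt N + 1" unfolding j_def using sN by linarith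
  have jp: "1 \<le> real j" using j1 sN by linarith
  have "real (j * (\<Sum>k\<in>{1..L}. f k)) \<le> real ((2 * k0 + j + 1 + 2 * j * j) * f k0)"
    using mult_sum_le_mode by (simp only: of_nat_le_iff)
  hence R: "real j * real (\<Sum>k\<in>{1..L}. f k)
      \<le> (2 * real k0 + real j + 1 + 2 * real j * real j) * real (f k0)"
    by (simp only: of_nat_mult of_nat_add of_nat_1 of_nat_numeral)
  have "2 * real k0 \<le> 2 * sqrt N * real j"
  proof -
    have "real k0 \<le> sqrt N * sqrt N" using N by simp
    also have "\<dots> \<le> sqrt N * real j" using j1 sN by (intro mult_left_mono) auto
    finally show ?thesis by simp
  qed
  moreover have "real j + 1 \<le> 2 * sqrt N * real j"
    using mult_right_mono[OF sN, of "real j"] jp by linarith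
  moreover have "2 * real j * real j \<le> 4 * sqrt N * real j"
    using mult_right_mono[of "real j" "2 * sqrt N" "real j"] j2 sN by linarith
  ultimately have "2 * real k0 + real j + 1 + 2 * real j * real j \<le> 8 * sqrt N * real j"
    by linarith
  hence "(2 * real k0 + real j + 1 + 2 * real j * real j) * real (f k0)
      \<le> (8 * sqrt N * real j) * real (f k0)"
    by (rule mult_right_mono) simp
  hence "real j * real (\<Sum>k\<in>{1..L}. f k) \<le> real j * (8 * sqrt N * real (f k0))"
    using R by (simp add: algebra_simps)
  thus ?thesis using jp by simp
qed

end

text \<open>Moving \<open>i \<le> j\<close> below \<open>k0\<close> changes numerator and denominator of the ratio by \<open>O(j n)\<close>,
which \<open>(\<rho> - 1) (k0 + 1) k0 \<ge> 15 j n\<close> absorbs because \<open>k0 \<ge> n/10\<close>.\<close>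
lemma shifted_product_le:
  fixes n k0 a b i j :: real
  assumes n1: "1 \<le> n" and k0n: "n / 10 \<le> k0" and ka: "k0 \<le> a" and kb: "k0 \<le> b"
    and an: "a \<le> n + 1" and bn: "b \<le> n + 1"
    and mode: "(a - k0) * (b - k0) \<le> (k0 + 1) * k0" and i0: "0 \<le> i" and ij: "i \<le> j"
    and jn: "1500 * j \<le> n"
  shows "(a - (k0 - i)) * (b - (k0 - i)) \<le> (1 + 1500 * j / n) * ((k0 - i + 1) * (k0 - i))"
proof -
  define \<rho> where "\<rho> = 1 + 1500 * j / n"
  define K where "K = (k0 + 1) * k0"
  have npos: "0 < n" using n1 by simp
  have j0: "0 \<le> j" using i0 ij by simp
  have jle: "j \<le> n" using jn j0 by simp
  have k0pos: "0 \<le> k0" using k0n npos by simp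
  have e1: "(a - (k0 - i)) * (b - (k0 - i)) = (a - k0) * (b - k0) + i * ((a - k0) + (b - k0)) + i * i"
    by (simp add: algebra_simps)
  have e2: "(k0 - i + 1) * (k0 - i) = K - i * (2 * k0 + 1) + i * i"
    unfolding K_def by (simp add: algebra_simps)
  have h1: "i * ((a - k0) + (b - k0)) \<le> i * (2 * n + 2)"
    using an bn k0pos i0 by (intro mult_left_mono) auto
  have h2: "i * (6 * n + 8 + i) \<le> j * (15 * n)"
    using ij i0 jle n1 by (intro mult_mono) auto
  have kk: "(n / 10) * (n / 10) \<le> k0 * k0" using k0n npos by (intro mult_mono) auto
  have Kge: "n * n / 100 \<le> K" unfolding K_def using kk k0pos by (simp add: algebra_simps)
  have r1: "\<rho> - 1 = 1500 * j / n" unfolding \<rho>_def by simp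
  have h3: "15 * n * j \<le> (\<rho> - 1) * K"
  proof -
    have "(1500 * j / n) * (n * n / 100) \<le> (1500 * j / n) * K"
      using Kge j0 npos by (intro mult_left_mono) auto
    moreover have "(1500 * j / n) * (n * n / 100) = 15 * n * j" using npos by (simp add: field_simps)
    ultimately show ?thesis unfolding r1 by simp
  qed
  have rho1: "1 \<le> \<rho>" unfolding \<rho>_def using j0 npos by simp
  have rho2: "\<rho> \<le> 2" unfolding \<rho>_def using jn npos by (simp add: field_simps)
  have h4: "\<rho> * (i * (2 * k0 + 1)) \<le> 2 * (i * (2 * n + 3))"
  proof -
    have x1: "i * (2 * k0 + 1) \<le> i * (2 * n + 3)" using ka an i0 by (intro mult_left_mono) auto
    have x2: "0 \<le> i * (2 * k0 + 1)" using i0 k0pos by simp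
    show ?thesis by (rule mult_mono[OF rho2 x1 _ x2]) simp
  qed
  have h5: "0 \<le> \<rho> * (i * i)" using rho1 i0 by simp
  have "(a - (k0 - i)) * (b - (k0 - i)) \<le> K + i * (2 * n + 2) + i * i"
    using e1 h1 mode unfolding K_def by linarith
  also have "\<dots> \<le> \<rho> * K - \<rho> * (i * (2 * k0 + 1)) + \<rho> * (i * i)"
  proof -
    have "i * (2 * n + 2) + i * i + 2 * (i * (2 * n + 3)) = i * (6 * n + 8 + i)" by (simp add: algebra_simps)
    hence "i * (2 * n + 2) + i * i + 2 * (i * (2 * n + 3)) \<le> (\<rho> - 1) * K" using h2 h3 by (simp add: algebra_simps)
    thus ?thesis using h4 h5 by (simp add: algebra_simps)
  qed
  also have "\<dots> = \<rho> * ((k0 - i + 1) * (k0 - i))" unfolding e2 by (simp add: algebra_simps)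
  finally show ?thesis unfolding \<rho>_def .
qed

lemma one_plus_power_le_3:
  fixes n j :: nat
  assumes "0 < n" and "real j \<le> sqrt (real n) / 40"
  shows "(1 + 1500 * real j / real n) ^ j \<le> 3"
proof -
  have "(1 + 1500 * real j / real n) ^ j \<le> exp (1500 * real j / real n) ^ j"
    by (intro power_mono exp_ge_add_one_self) (use assms in simp)
  also have "\<dots> = exp (real j * (1500 * real j / real n))" by (rule exp_of_nat_mult[symmetric])
  also have "\<dots> \<le> exp 1"
  proof -
    have "real j * real j \<le> (sqrt (real n) / 40) * (sqrt (real n) / 40)"
      using assms by (intro mult_mono) auto
    hence "real j * real j \<le> real n / 1600" by simp
    hence "real j * (1500 * real j / real n) \<le> 1" using assms by (simp add: field_simps)
    thus ?thesis by simp
  qed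
  also have "\<dots> \<le> 3" by (rule exp_le)
  finally show ?thesis .
qed

lemma le_power_mul_of_step_bound:
  fixes g :: "nat \<Rightarrow> real"
  assumes step: "\<And>i. 1 \<le> i \<Longrightarrow> i \<le> j \<Longrightarrow> g (k0 - i + 1) \<le> \<rho> * g (k0 - i)"
    and "1 \<le> \<rho>" and "j < k0" and "i \<le> j"
  shows "g k0 \<le> \<rho> ^ i * g (k0 - i)"
  using \<open>i \<le> j\<close>
proof (induction i)
  case (Suc i)
  have "k0 - Suc i + 1 = k0 - i" using Suc.prems \<open>j < k0\<close> by simp
  hence "g (k0 - i) \<le> \<rho> * g (k0 - Suc i)" using step[of "Suc i"] Suc.prems by simp
  hence "\<rho> ^ i * g (k0 - i) \<le> \<rho> ^ i * (\<rho> * g (k0 - Suc i))"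
    using \<open>1 \<le> \<rho>\<close> by (intro mult_left_mono) auto
  thus ?case using Suc by (simp add: algebra_simps)
qed simp

context ratio_mode
begin

lemma ratio_at_mode_real:
  assumes "k0 \<le> a" "k0 \<le> b"
  shows "(real a - real k0) * (real b - real k0) \<le> (real k0 + 1) * real k0"
proof -
  have "real ((a - k0) * (b - k0)) \<le> real ((k0 + 1) * k0)"
    using ratio_at_mode by (simp only: of_nat_le_iff)
  moreover have "real ((a - k0) * (b - k0)) = (real a - real k0) * (real b - real k0)"
    by (simp only: of_nat_mult of_nat_diff[OF assms(1)] of_nat_diff[OF assms(2)])
  ultimately show ?thesis by (simp add: algebra_simps)
qed

lemma mode_ge_tenth:
  fixes n :: real
  assumes "10 \<le> n" "n / 5 \<le> real a" "3 * n / 10 \<le> real b" "k0 \<le> a" "k0 \<le> b"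
  shows "n / 10 \<le> real k0"
proof (rule ccontr)
  assume "\<not> n / 10 \<le> real k0"
  hence k: "real k0 < n / 10" by simp
  have "(n / 10) * (n / 5) < (real a - real k0) * (real b - real k0)"
    using k assms by (intro mult_strict_mono) auto
  also have "\<dots> \<le> (real k0 + 1) * real k0" using ratio_at_mode_real assms by simp
  also have "\<dots> \<le> (n / 10 + 1) * (n / 10)" using k by (intro mult_mono) auto
  finally show False using assms by (simp add: field_simps)
qed

lemma ratio_near_mode:
  fixes n :: nat
  assumes n: "1 \<le> n" and k0n: "real n / 10 \<le> real k0" and ka: "k0 \<le> a" and kb: "k0 \<le> b"
    and an: "a \<le> n + 1" and bn: "b \<le> n + 1" and jn: "1500 * real j \<le> real n"
    and i: "1 \<le> i" "i \<le> j" "i < k0"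
  shows "real (f (k0 - i + 1)) \<le> (1 + 1500 * real j / real n) * real (f (k0 - i))"
proof -
  define k where "k = k0 - i"
  define \<rho> where "\<rho> = 1 + 1500 * real j / real n"
  have k1: "1 \<le> k" and rk: "real k = real k0 - real i" unfolding k_def using i by auto
  have kab: "k \<le> a" "k \<le> b" unfolding k_def using ka kb by auto
  have "real (f (k + 1) * (k + 1) * k) = real (f k * (a - k) * (b - k))" using ratio[OF k1] by simp
  hence eq: "real (f (k + 1)) * ((real k + 1) * real k)
      = real (f k) * ((real a - real k) * (real b - real k))"
    by (simp only: of_nat_mult of_nat_diff[OF kab(1)] of_nat_diff[OF kab(2)] of_nat_add of_nat_1
        mult.assoc)
  have "(real a - (real k0 - real i)) * (real b - (real k0 - real i))
      \<le> \<rho> * ((real k0 - real i + 1) * (real k0 - real i))"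
    unfolding \<rho>_def using ratio_at_mode_real[OF ka kb] n k0n ka kb an bn i jn
    by (intro shifted_product_le) auto
  hence "(real a - real k) * (real b - real k) \<le> \<rho> * ((real k + 1) * real k)" unfolding rk .
  hence "real (f (k + 1)) * ((real k + 1) * real k) \<le> real (f k) * (\<rho> * ((real k + 1) * real k))"
    unfolding eq by (rule mult_left_mono) simp
  hence "real (f (k + 1)) * ((real k + 1) * real k) \<le> (\<rho> * real (f k)) * ((real k + 1) * real k)"
    by (simp add: algebra_simps)
  moreover have "0 < (real k + 1) * real k" using k1 by simp
  ultimately show ?thesis unfolding k_def \<rho>_def by (rule mult_right_le_imp_le)
qed

lemma mode_le_window_sum:
  fixes n :: nat
  assumes n: "1600 \<le> n" and k0n: "real n / 10 \<le> real k0" and ka: "k0 \<le> a" and kb: "k0 \<le> b"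
    and an: "a \<le> n + 1" and bn: "b \<le> n + 1"
  shows "sqrt (real n) / 40 * real (f k0) \<le> 3 * real (\<Sum>i\<in>{0..nat \<lfloor>sqrt (real n) / 40\<rfloor>}. f (k0 - i))"
proof -
  define j where "j = nat \<lfloor>sqrt (real n) / 40\<rfloor>"
  define \<rho> where "\<rho> = 1 + 1500 * real j / real n"
  have sn: "40 \<le> sqrt (real n)" by (rule real_le_rsqrt) (use n in simp)
  have sq: "sqrt (real n) * sqrt (real n) = real n" by simp
  have jle: "real j \<le> sqrt (real n) / 40" and jge: "sqrt (real n) / 40 \<le> real j + 1"
    unfolding j_def using sn by linarith+
  have jn: "1500 * real j \<le> real n"
    using jle mult_right_mono[of 40 "sqrt (real n)" "sqrt (real n)"] sn sq by linarith
  have jk0: "j < k0"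
  proof -
    have "sqrt (real n) * 40 \<le> sqrt (real n) * sqrt (real n)" using sn by (intro mult_left_mono) auto
    hence "real j < real k0" using jle k0n sq sn by linarith
    thus ?thesis by simp
  qed
  have rho1: "1 \<le> \<rho>" unfolding \<rho>_def by simp
  have "real (f k0) \<le> 3 * real (f (k0 - i))" if "i \<in> {0..j}" for i
  proof -
    have "real (f k0) \<le> \<rho> ^ i * real (f (k0 - i))"
      using that rho1 jk0 ratio_near_mode[OF _ k0n ka kb an bn jn] n unfolding \<rho>_def
      by (intro le_power_mul_of_step_bound[where j = j]) auto
    also have "\<dots> \<le> \<rho> ^ j * real (f (k0 - i))"
      using that rho1 by (intro mult_right_mono power_increasing) auto
    also have "\<dots> \<le> 3 * real (f (k0 - i))"
      using one_plus_power_le_3[OF _ jle] n unfolding \<rho>_def by (intro mult_right_mono) auto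
    finally show ?thesis .
  qed
  hence "(\<Sum>i\<in>{0..j}. real (f k0)) \<le> (\<Sum>i\<in>{0..j}. 3 * real (f (k0 - i)))"
    by (rule sum_mono)
  hence "(real j + 1) * real (f k0) \<le> 3 * real (\<Sum>i\<in>{0..j}. f (k0 - i))"
    by (simp add: sum_distrib_left add.commute)
  moreover have "sqrt (real n) / 40 * real (f k0) \<le> (real j + 1) * real (f k0)"
    using jge by (intro mult_right_mono) auto
  ultimately show ?thesis unfolding j_def by linarith
qed

end

lemma choose_ratio: "((N - 1) choose (R + 1)) * (R + 1) * N = (N choose R) * (N - R) * (N - R - 1)"
proof -
  have absorb_Suc: "Suc R * ((N - 1) choose Suc R) = (N - 1) * ((N - 1 - 1) choose R)" by (rule binomial_absorption)
  have absorb_N: "(N - R) * (N choose R) = N * ((N - 1) choose R)" by (rule binomial_absorb_comp)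
  have absorb_N1: "(N - 1 - R) * ((N - 1) choose R) = (N - 1) * ((N - 1 - 1) choose R)" by (rule binomial_absorb_comp)
  have "((N - 1) choose (R + 1)) * (R + 1) * N = N * (Suc R * ((N - 1) choose Suc R))" by (simp add: mult_ac)
  also have "\<dots> = N * ((N - 1 - R) * ((N - 1) choose R))" unfolding absorb_Suc absorb_N1 ..
  also have "\<dots> = ((N - R) * (N choose R)) * (N - 1 - R)" unfolding absorb_N by (simp add: mult_ac)
  also have "\<dots> = (N choose R) * (N - R) * (N - R - 1)" by (simp add: mult_ac)
  finally show ?thesis .
qed

lemma q_Suc_ratio:
  assumes r: "0 \<le> r" and rn: "2 * (r + 1) \<le> int n"
  shows "real (q n (r + 1)) * (real_of_int r + 1) * (real n - real_of_int r + 1)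
       = real (q n r) * (real n - 2 * real_of_int r + 1) * (real n - 2 * real_of_int r)"
proof -
  obtain R where R: "r = int R" using r nonneg_int_cases by blast
  define N where "N = n - R + 1"
  have RN: "2 * R + 2 \<le> n" using rn R by simp
  have q_Suc: "q n (r + 1) = (N - 1) choose (R + 1)"
  proof -
    have "q n (r + 1) = nat (int n - (r + 1) + 1) choose nat (r + 1)" by (rule q_eq_choose) (use r rn in auto)
    moreover have "nat (int n - (r + 1) + 1) = N - 1" "nat (r + 1) = R + 1" using R RN unfolding N_def by auto
    ultimately show ?thesis by simp
  qed
  have q_R: "q n r = N choose R"
  proof -
    have "q n r = nat (int n - r + 1) choose nat r" by (rule q_eq_choose) (use r rn in auto)
    moreover have "nat (int n - r + 1) = N" "nat r = R" using R RN unfolding N_def by auto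
    ultimately show ?thesis by simp
  qed
  have "real (((N - 1) choose (R + 1)) * (R + 1) * N) = real ((N choose R) * (N - R) * (N - R - 1))"
    using choose_ratio by simp
  hence ratio_real: "real ((N - 1) choose (R + 1)) * (real R + 1) * real N = real (N choose R) * real (N - R) * real (N - R - 1)"
    by (simp only: of_nat_mult of_nat_add of_nat_1)
  have casts: "real N = real n - real R + 1" "real (N - R) = real n - 2 * real R + 1"
    "real (N - R - 1) = real n - 2 * real R" using RN unfolding N_def by (simp_all add: of_nat_diff)
  have q_Suc_real: "real (q n (r + 1)) = real ((N - 1) choose (R + 1))" using q_Suc by simp
  have q_real: "real (q n r) = real (N choose R)" using q_R by simp
  have rr: "real_of_int r = real R" using R by simp
  show ?thesis unfolding q_Suc_real q_real rr using ratio_real unfolding casts .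
qed

lemma argmax_q_range:
  assumes n: "2 \<le> n" and rs_max: "\<forall>r'. q n r' \<le> q n rs"
  shows "n \<le> q n rs" "0 \<le> rs" "2 * rs \<le> int n"
proof -
  show qn: "n \<le> q n rs" using rs_max q_1[OF n] by metis
  show "0 \<le> rs" using qn n q_neg[of rs n] by (cases "0 \<le> rs") auto
  show "2 * rs \<le> int n" using qn n q_le_1_if_n_less_twice[of n rs] by (cases "2 * rs \<le> int n") auto
qed

lemma argmax_q_lower:
  assumes n: "100 \<le> n" and rs_max: "\<forall>r'. q n r' \<le> q n rs"
  shows "real n / 4 - 1 < real_of_int rs"
proof (rule ccontr)
  define x where "x = real_of_int rs"
  assume "\<not> real n / 4 - 1 < real_of_int rs"
  hence xa: "x \<le> real n / 4 - 1" unfolding x_def by simp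
  have qpos: "0 < q n rs" and rs0: "0 \<le> rs" using argmax_q_range[OF _ rs_max] n by auto
  hence x0: "0 \<le> x" unfolding x_def by simp
  have "real_of_int (2 * (rs + 1)) \<le> real_of_int (int n)" using xa unfolding x_def by simp
  hence "2 * (rs + 1) \<le> int n" by (simp only: of_int_le_iff)
  hence ratio: "real (q n (rs + 1)) * ((x + 1) * (real n - x + 1))
      = real (q n rs) * ((real n - 2 * x + 1) * (real n - 2 * x))"
    using q_Suc_ratio[OF rs0] unfolding x_def by (simp add: mult.assoc)
  have "(x + 1) * (real n - x + 1) \<le> (real n / 4) * (real n + 1)" using x0 xa by (intro mult_mono) auto
  also have "\<dots> < (real n / 2 + 3) * (real n / 2 + 2)" using n by (simp add: algebra_simps)
  also have "\<dots> \<le> (real n - 2 * x + 1) * (real n - 2 * x)" using xa x0 by (intro mult_mono) auto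
  finally have "real (q n rs) * ((x + 1) * (real n - x + 1))
      < real (q n rs) * ((real n - 2 * x + 1) * (real n - 2 * x))"
    using qpos by simp
  hence "real (q n rs) < real (q n (rs + 1))"
    unfolding ratio[symmetric] using x0 xa by (simp add: mult_less_cancel_right)
  thus False using rs_max by (metis not_le of_nat_le_iff)
qed

lemma argmax_q_upper:
  assumes n: "100 \<le> n" and rs_max: "\<forall>r'. q n r' \<le> q n rs"
  shows "real_of_int rs < 8 * real n / 25 + 1"
proof (rule ccontr)
  define y where "y = real_of_int rs - 1"
  assume "\<not> real_of_int rs < 8 * real n / 25 + 1"
  hence yb: "8 * real n / 25 \<le> y" unfolding y_def by simp
  have qpos: "0 < q n rs" and rsn: "2 * rs \<le> int n" using argmax_q_range[OF _ rs_max] n by auto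
  have y0: "0 \<le> rs - 1" using yb n unfolding y_def by linarith
  have "real_of_int (2 * rs) \<le> real_of_int (int n)" using rsn by (simp only: of_int_le_iff)
  hence yn: "2 * y + 2 \<le> real n" unfolding y_def by simp
  have ratio: "real (q n rs) * ((y + 1) * (real n - y + 1))
      = real (q n (rs - 1)) * ((real n - 2 * y + 1) * (real n - 2 * y))"
    using q_Suc_ratio[OF y0] rsn unfolding y_def by (simp add: mult.assoc)
  have pos: "0 < (real n - 2 * y + 1) * (real n - 2 * y)" using yn by (intro mult_pos_pos) auto
  have "(real n - 2 * y + 1) * (real n - 2 * y) \<le> (9 * real n / 25 + 1) * (9 * real n / 25)"
    using yb yn by (intro mult_mono) auto
  also have "\<dots> < (8 * real n / 25) * (real n / 2 + 1)"
  proof -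
    have nr: "100 \<le> real n" using n by simp
    have h: "100 * real n \<le> real n * real n" using nr by (intro mult_right_mono) auto
    have e1: "(9 * real n / 25 + 1) * (9 * real n / 25) = 81 / 625 * (real n * real n) + 9 / 25 * real n"
      by (simp add: algebra_simps)
    have e2: "(8 * real n / 25) * (real n / 2 + 1) = 4 / 25 * (real n * real n) + 8 / 25 * real n"
      by (simp add: algebra_simps)
    show ?thesis unfolding e1 e2 using h nr by linarith
  qed
  also have "\<dots> \<le> (y + 1) * (real n - y + 1)" using yb yn n by (intro mult_mono) auto
  finally have "real (q n rs) * ((real n - 2 * y + 1) * (real n - 2 * y))
      < real (q n (rs - 1)) * ((real n - 2 * y + 1) * (real n - 2 * y))"
    using qpos ratio by (metis mult_strict_left_mono of_nat_0_less_iff)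
  hence "real (q n rs) < real (q n (rs - 1))" using pos by (simp add: mult_less_cancel_right)
  thus False using rs_max by (metis not_le of_nat_le_iff)
qed

lemma sqrt_mult_ln_le:
  assumes n: "400000000 \<le> n"
  shows "sqrt (real n * ln (real n)) \<le> real n / 100"
proof -
  have nr: "400000000 \<le> real n" using n by simp
  have sn: "20000 \<le> sqrt (real n)" by (rule real_le_rsqrt) (use nr in simp)
  have sq: "sqrt (real n) * sqrt (real n) = real n" by simp
  have "ln (real n) = 2 * ln (sqrt (real n))" using nr by (simp add: ln_sqrt)
  also have "\<dots> \<le> 2 * sqrt (real n)"
  proof -
    have "ln (sqrt (real n)) < sqrt (real n)" by (rule ln_less_self) (use n in simp)
    thus ?thesis by simp
  qed
  finally have l: "ln (real n) \<le> 2 * sqrt (real n)" .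
  have "real n * ln (real n) \<le> real n * (2 * sqrt (real n))" using l nr by (intro mult_left_mono) auto
  also have "\<dots> \<le> real n * (sqrt (real n) * sqrt (real n) / 10000)"
  proof -
    have "20000 * sqrt (real n) \<le> sqrt (real n) * sqrt (real n)" using sn by (intro mult_right_mono) auto
    hence "2 * sqrt (real n) \<le> sqrt (real n) * sqrt (real n) / 10000" by linarith
    thus ?thesis using nr by (intro mult_left_mono) auto
  qed
  also have "\<dots> = (real n / 100) ^ 2" using sq by (simp add: power2_eq_square)
  finally show ?thesis using nr by (intro real_le_lsqrt) auto
qed

lemma ratio_mode_of_qd_max:
  assumes r: "0 \<le> r" and rn: "2 * r \<le> int n"
    and ds_max: "\<forall>d'. qd n r d' \<le> qd n r ds" and pos: "0 < qd n r ds"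
  defines "a \<equiv> nat (r + 1)" and "M \<equiv> nat (int n - 2 * r)"
    and "k0 \<equiv> nat (int n - 2 * r + 1 - ds)"
  shows "ratio_mode (choose_pair a M) a (M + 1) k0" "k0 \<le> a" "k0 \<le> M + 1"
proof -
  have qd_eq: "qd n r d = choose_pair a M (nat (int n - 2 * r + 1 - d))" for d
    unfolding a_def M_def by (rule qd_eq_choose_pair[OF r rn])
  have le_mode: "choose_pair a M k \<le> choose_pair a M k0" for k
  proof -
    have "choose_pair a M k = qd n r (int n - 2 * r + 1 - int k)" using qd_eq by simp
    also have "\<dots> \<le> qd n r ds" using ds_max by blast
    finally show ?thesis using qd_eq[of ds] unfolding k0_def by simp
  qed
  have "0 < choose_pair a M k0" using pos qd_eq[of ds] unfolding k0_def by simp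
  then show "ratio_mode (choose_pair a M) a (M + 1) k0" "k0 \<le> a" "k0 \<le> M + 1"
    using choose_pair_pos_imp[of a M k0] le_mode choose_pair_ratio by (auto intro!: ratio_mode.intro)
qed

lemma q_le_sqrt_mul_qd_max:
  assumes n: "1 \<le> n" and r: "0 \<le> r" and rn: "2 * r \<le> int n"
    and ds_max: "\<forall>d'. qd n r d' \<le> qd n r ds"
  shows "real (q n r) \<le> 16 * sqrt (real n) * real (qd n r ds)"
proof (cases "qd n r ds = 0")
  case True
  then have "qd n r d = 0" for d using ds_max by (metis le_zero_eq)
  then show ?thesis unfolding q_eq_sum_qd by simp
next
  case False
  define a M k0 where "a = nat (r + 1)" and "M = nat (int n - 2 * r)"
    and "k0 = nat (int n - 2 * r + 1 - ds)"
  interpret ratio_mode "choose_pair a M" a "M + 1" k0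
    unfolding a_def M_def k0_def using ratio_mode_of_qd_max[OF r rn ds_max] False by simp
  have "k0 \<le> a" using ratio_mode_of_qd_max[OF r rn ds_max] False unfolding a_def k0_def by simp
  hence "real k0 \<le> real n + 1" using rn unfolding a_def by linarith
  hence "real (q n r) \<le> 8 * sqrt (real n + 1) * real (qd n r ds)"
    using sum_le_sqrt_mul_mode[of "real n + 1"] q_eq_sum_choose_pair[OF r rn]
      qd_eq_choose_pair[OF r rn, of ds] unfolding a_def M_def k0_def by simp
  also have "\<dots> \<le> 8 * (2 * sqrt (real n)) * real (qd n r ds)"
  proof -
    have "sqrt (real n + 1) \<le> sqrt (4 * real n)" using n by (intro real_sqrt_le_mono) simp
    hence "sqrt (real n + 1) \<le> 2 * sqrt (real n)" by (simp add: real_sqrt_mult)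
    thus ?thesis by (intro mult_right_mono mult_left_mono) auto
  qed
  finally show ?thesis by simp
qed

lemma qd_max_mul_sqrt_le:
  assumes n: "1600 \<le> n" and r_lo: "real n / 5 \<le> real_of_int r + 1"
    and r_hi: "3 * real n / 10 \<le> real n - 2 * real_of_int r + 1"
    and ds_max: "\<forall>d'. qd n r d' \<le> qd n r ds"
  shows "sqrt (real n) * real (qd n r ds) \<le> 120 * real (q n r)"
proof (cases "qd n r ds = 0")
  case False
  have r: "0 \<le> r" using r_lo n by linarith
  have "real_of_int (2 * r) \<le> real_of_int (int n)" using r_hi n by simp
  hence rn: "2 * r \<le> int n" by (simp only: of_int_le_iff)
  define a M k0 where "a = nat (r + 1)" and "M = nat (int n - 2 * r)"
    and "k0 = nat (int n - 2 * r + 1 - ds)"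
  interpret ratio_mode "choose_pair a M" a "M + 1" k0
    unfolding a_def M_def k0_def using ratio_mode_of_qd_max[OF r rn ds_max] False by simp
  have ka: "k0 \<le> a" and kb: "k0 \<le> M + 1"
    using ratio_mode_of_qd_max[OF r rn ds_max] False unfolding a_def M_def k0_def by simp_all
  have ra: "real a = real_of_int r + 1" and rb: "real (M + 1) = real n - 2 * real_of_int r + 1"
    unfolding a_def M_def using r rn by simp_all
  have "real n / 10 \<le> real k0"
    using mode_ge_tenth[of "real n"] ka kb n r_lo r_hi unfolding ra rb by simp
  moreover have "a \<le> n + 1" "M + 1 \<le> n + 1" unfolding a_def M_def using r rn by simp_all
  ultimately have window: "sqrt (real n) / 40 * real (qd n r ds)
      \<le> 3 * real (\<Sum>i\<in>{0..nat \<lfloor>sqrt (real n) / 40\<rfloor>}. choose_pair a M (k0 - i))"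
    using mode_le_window_sum[OF n _ ka kb] qd_eq_choose_pair[OF r rn, of ds]
    unfolding a_def M_def k0_def by simp
  have "int k0 = int n - 2 * r + 1 - ds" using mode_ge_1 unfolding k0_def by simp
  hence "nat (int n - 2 * r + 1 - (ds + int i)) = k0 - i" for i
    using nat_diff_distrib'[of "int k0" "int i"] by (simp add: algebra_simps)
  hence "choose_pair a M (k0 - i) = qd n r (ds + int i)" for i
    using qd_eq_choose_pair[OF r rn, of "ds + int i"] unfolding a_def M_def by simp
  hence "(\<Sum>i\<in>{0..nat \<lfloor>sqrt (real n) / 40\<rfloor>}. choose_pair a M (k0 - i))
      = (\<Sum>d\<in>(\<lambda>i. ds + int i) ` {0..nat \<lfloor>sqrt (real n) / 40\<rfloor>}. qd n r d)"
    by (simp add: sum.reindex inj_on_def)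
  also have "\<dots> \<le> q n r" by (rule sum_qd_le_q) simp
  finally have "real (\<Sum>i\<in>{0..nat \<lfloor>sqrt (real n) / 40\<rfloor>}. choose_pair a M (k0 - i)) \<le> real (q n r)"
    by (simp only: of_nat_le_iff)
  then show ?thesis using window by linarith
qed simp

lemma qd_argmax_bounds:
  fixes n :: nat and rs r ds :: int
  assumes n: "1 \<le> n" and rs_max: "\<forall>r'. q n r' \<le> q n rs"
    and r_near: "real_of_int \<bar>r - rs\<bar> \<le> sqrt (real n * ln (real n))"
    and ds_max: "\<forall>d'. qd n r d' \<le> qd n r ds"
  shows "real (q n r) \<le> 40000 * sqrt (real n) * real (qd n r ds)"
    and "sqrt (real n) * real (qd n r ds) \<le> 20000 * real (q n r)"
proof -
  have sn1: "1 \<le> sqrt (real n)" using n by simp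
  have "real (q n r) \<le> 40000 * sqrt (real n) * real (qd n r ds) \<and>
      sqrt (real n) * real (qd n r ds) \<le> 20000 * real (q n r)"
  proof (cases "n < 400000000")
    case True
    hence "sqrt (real n) \<le> sqrt (20000\<^sup>2)" by (intro real_sqrt_le_mono) simp
    hence sn: "sqrt (real n) \<le> 20000" by simp
    have "real (q n r) \<le> real (n + 1) * real (qd n r ds)"
      using q_le_card_mul_qd_max[OF ds_max] by (metis of_nat_le_iff of_nat_mult)
    also have "real (n + 1) \<le> 40000 * sqrt (real n)"
      using mult_right_mono[OF sn, of "sqrt (real n)"] sn1 by simp
    finally have "real (q n r) \<le> 40000 * sqrt (real n) * real (qd n r ds)"
      by (simp add: mult_right_mono)
    moreover have "qd n r ds \<le> q n r" using sum_qd_le_q[of "{ds}" n r] by simp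
    ultimately show ?thesis using sn by (simp add: mult_mono)
  next
    case False
    have "real n / 4 - 1 < real_of_int rs" "real_of_int rs < 8 * real n / 25 + 1"
      using argmax_q_lower[OF _ rs_max] argmax_q_upper[OF _ rs_max] False by simp_all
    moreover have "\<bar>real_of_int r - real_of_int rs\<bar> \<le> real n / 100"
      using r_near sqrt_mult_ln_le[of n] False by simp
    ultimately have r_lo: "6 * real n / 25 - 1 \<le> real_of_int r"
      and r_hi: "real_of_int r \<le> 33 * real n / 100 + 1" by linarith+
    have "real (q n r) \<le> 16 * (sqrt (real n) * real (qd n r ds))"
      using q_le_sqrt_mul_qd_max[OF n _ _ ds_max] r_lo r_hi False by (simp add: mult.assoc)
    moreover have "sqrt (real n) * real (qd n r ds) \<le> 120 * real (q n r)"
      using qd_max_mul_sqrt_le[OF _ _ _ ds_max] r_lo r_hi False by simp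
    moreover have "0 \<le> sqrt (real n) * real (qd n r ds)" by simp
    ultimately show ?thesis unfolding mult.assoc by linarith
  qed
  then show "real (q n r) \<le> 40000 * sqrt (real n) * real (qd n r ds)"
    and "sqrt (real n) * real (qd n r ds) \<le> 20000 * real (q n r)" by auto
qed

theorem mainTheorem9:
  shows "\<exists>C1 C2 :: real. C1 > 0 \<and> C2 > 0 \<and>
    (\<forall>(n::nat) (rs::int) (r::int) (ds::int).
       n \<ge> 1 \<longrightarrow>
       (\<forall>r'. q n r' \<le> q n rs) \<longrightarrow>
       real_of_int \<bar>r - rs\<bar> \<le> sqrt (real n * ln (real n)) \<longrightarrow>
       (\<forall>d'. qd n r d' \<le> qd n r ds) \<longrightarrow>
       C1 * real (q n r) / sqrt (real n) \<le> real (qd n r ds) \<and>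
       real (qd n r ds) \<le> C2 * real (q n r) / sqrt (real n))"
proof -
  have "1 / 40000 * real (q n r) / sqrt (real n) \<le> real (qd n r ds) \<and>
      real (qd n r ds) \<le> 20000 * real (q n r) / sqrt (real n)"
    if "1 \<le> n" "\<forall>r'. q n r' \<le> q n rs" "real_of_int \<bar>r - rs\<bar> \<le> sqrt (real n * ln (real n))"
      "\<forall>d'. qd n r d' \<le> qd n r ds"
    for n :: nat and rs r ds :: int
  proof -
    have "0 < sqrt (real n)" using that by simp
    then show ?thesis using qd_argmax_bounds[OF that] by (simp add: field_simps)
  qed
  then show ?thesis by (intro exI[of _ "1 / 40000"] exI[of _ 20000]) simp
qed

end
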